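(* Let $\alpha,n\in\mathbb{N}$ and let $l$ be an integer with $l\geqslant\lfloor n/2^{\alpha}\rfloor\geqslant1$ and $$l\equiv\Big\lfloor\frac n{2^{\alpha}}\Big\rfloor\pmod{2^{\lfloor\log_2(n/2^{\alpha})\rfloor}}.$$ Then $$\operatorname{ord}_2\Bigg(\sum_{k\equiv0\ (\mathrm{mod}\ 2^{\alpha})}\binom nk(-1)^k\Big(\frac k{2^{\alpha}}\Big)^l\Bigg)=\operatorname{ord}_2\Big(\Big\lfloor\frac n{2^{\alpha}}\Big\rfloor!\Big).$$
   Context: $\operatorname{ord}_2$ denotes the $2$-adic order. The sum runs over all integers $k\equiv 0\pmod{2^\alpha}$, with $\binom nk=0$ unless $0\le k\le n$. *)

theory Defs
  imports "HOL-Number_Theory.Number_Theory" "HOL-Computational_Algebra.Computational_Algebra"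
begin

end

theory Submission
  imports Defs "HOL-Combinatorics.Stirling"
begin

(*
  Write m = n div 2^alpha and A f for the sum of (n choose k) (-1)^k f (k div 2^alpha) over the
  k <= n divisible by 2^alpha. Expanding j^l into falling factorials with the Stirling numbers
  S(l, i) of the second kind, the falling factorials of degree i > m vanish at every k div 2^alpha,
  the one of degree m contributes S(l, m) (n choose m 2^alpha) (-1)^(m 2^alpha) m!, and those of
  degree i < m are integer combinations of the moments A (j^t) with t < m. These moments are
  divisible by 2^(v2(m!) + 1): for alpha = 0 they vanish, and for alpha > 0 this is a 2-adic bound
  for the moments of the coefficients of (1 + X)^n along residue classes modulo 2^alpha, which
  rests on (1 + X)^(2^beta) = 1 + X^(2^beta) (mod 2). Finally (n choose m 2^alpha) is odd by
  Lucas' theorem, and S(l, m) is odd because S(m + d, m) = (d + c choose c) (mod 2) with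
  c = (m - 1) div 2 < 2^L, while 2^L divides d = l - m by hypothesis.
*)

section \<open>2-adic valuations of factorials\<close>

abbreviation v2 :: "int \<Rightarrow> nat" where "v2 x \<equiv> multiplicity (2::int) x"

lemma multiplicity_of_nat: "multiplicity (int p) (int x) = multiplicity p x"
  by (simp add: multiplicity_def flip: of_nat_power)

lemma multiplicity_eq_if_dvd_diff:
  fixes p x y :: "'a::{factorial_semiring_multiplicative, comm_ring_1}"
  assumes p: "prime p" and "y \<noteq> 0" and dvd: "p ^ Suc (multiplicity p y) dvd x - y"
  shows "x \<noteq> 0 \<and> multiplicity p x = multiplicity p y"
proof
  have unit: "\<not> is_unit p"
    using p not_prime_unit by blast
  have not_dvd: "\<not> p ^ Suc (multiplicity p y) dvd y"
    using power_dvd_iff_le_multiplicity[OF \<open>y \<noteq> 0\<close> unit] by (metis Suc_n_not_le_n)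
  then show "x \<noteq> 0" using dvd by auto
  show "multiplicity p x = multiplicity p y"
  proof (cases "x = y")
    case False
    then have "multiplicity p y < multiplicity p (x - y)"
      using dvd power_dvd_iff_le_multiplicity[of "x - y" p] unit by (simp del: power_Suc)
    then have "multiplicity p (y + (x - y)) = multiplicity p y"
      using False \<open>y \<noteq> 0\<close> by (intro multiplicity_sum_lt) auto
    then show ?thesis by simp
  qed simp
qed

lemma v2_odd: "odd x \<Longrightarrow> v2 x = 0"
  by (simp add: not_dvd_imp_multiplicity_0)

lemma v2_odd_mult:
  assumes "odd u"
  shows "v2 (u * x) = v2 x"
proof (cases "x = 0")
  case False
  moreover have "u \<noteq> 0" using assms by auto
  ultimately show ?thesis
    using assms by (simp add: prime_elem_multiplicity_mult_distrib v2_odd)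
qed simp

lemma v2_fact_Suc: "v2 (fact (Suc a)) = v2 (int (Suc a)) + v2 (fact a)"
  by (simp add: prime_elem_multiplicity_mult_distrib del: of_nat_Suc)

lemma v2_fact_Suc_dvd: "(2::int) ^ v2 (fact (Suc b)) dvd int (Suc b) * 2 ^ v2 (fact b)"
  unfolding v2_fact_Suc power_add by (intro mult_dvd_mono multiplicity_dvd) auto

lemma v2_fact_double: "v2 (fact (2 * m)) = m + v2 (fact m)"
proof (induction m)
  case (Suc m)
  have "int (Suc (Suc (2 * m))) = 2 * int (Suc m)" by simp
  then have "v2 (int (Suc (Suc (2 * m)))) = Suc (v2 (int (Suc m)))"
    using multiplicity_times_same[of "int (Suc m)" 2] by (simp only:) simp
  moreover have "v2 (int (Suc (2 * m))) = 0" by (intro v2_odd) simp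
  ultimately show ?case
    using Suc v2_fact_Suc[of "Suc (2 * m)"] v2_fact_Suc[of "2 * m"] v2_fact_Suc[of m]
    by (simp del: of_nat_Suc)
qed simp

lemma v2_fact_less: "0 < a \<Longrightarrow> v2 (fact a) < a"
proof (induction a rule: less_induct)
  case (less a)
  obtain m where "a = 2 * m \<or> a = Suc (2 * m)" by (metis oddE evenE Suc_eq_plus1)
  then show ?case
  proof
    assume a: "a = 2 * m"
    then show ?thesis using less.IH[of m] less.prems v2_fact_double[of m] by simp
  next
    assume a: "a = Suc (2 * m)"
    have "v2 (fact a) = v2 (fact (2 * m))"
      using a v2_fact_Suc[of "2 * m"] v2_odd[of "int a"] by simp
    then show ?thesis using less.IH[of m] a v2_fact_double[of m] by (cases "m = 0") auto
  qed
qed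

lemma v2_fact_le: "v2 (fact a) \<le> a"
  using v2_fact_less[of a] by (cases "a = 0") auto

lemma v2_fact_mono: "a \<le> b \<Longrightarrow> v2 (fact a) \<le> v2 (fact b)"
  by (intro dvd_imp_multiplicity_le) (auto intro: fact_dvd)

lemma v2_fact_le_binomial:
  assumes "a \<le> q"
  shows "v2 (fact q) \<le> v2 (fact (q - a)) + v2 (int (q choose a)) + a"
proof -
  have "fact q = fact a * fact (q - a) * int (q choose a)"
    using binomial_fact_lemma[OF assms] by (metis of_nat_fact of_nat_mult)
  then have "v2 (fact q) = v2 (fact a) + v2 (fact (q - a)) + v2 (int (q choose a))"
    using assms by (simp add: prime_elem_multiplicity_mult_distrib)
  then show ?thesis using v2_fact_le[of a] by simp
qed

section \<open>Parity of binomial coefficients and Stirling numbers\<close>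

lemma even_pow2_choose:
  assumes "0 < k" "k < 2 ^ L"
  shows "even ((2::nat) ^ L choose k)"
proof (rule ccontr)
  assume odd: "odd ((2::nat) ^ L choose k)"
  have "(2 ^ L choose k) * k = 2 ^ L * (2 ^ L - 1 choose (k - 1))"
    using assms times_binomial_minus1_eq[of k "2 ^ L"] by (simp add: mult.commute)
  then have "(2::nat) ^ L dvd (2 ^ L choose k) * k" by simp
  with odd have "(2::nat) ^ L dvd k"
    by (simp add: coprime_dvd_mult_right_iff)
  with assms show False by (auto dest: dvd_imp_le)
qed

lemma even_pow2_add_choose_iff:
  assumes "b < 2 ^ L"
  shows "even ((2 ^ L + x) choose b) \<longleftrightarrow> even (x choose b)"
proof -
  have "(2 ^ L + x) choose b = (x choose b) + (\<Sum>k\<in>{1..b}. (2 ^ L choose k) * (x choose (b - k)))"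
    by (simp add: vandermonde[symmetric] atMost_atLeast0 sum.atLeast_Suc_atMost)
  moreover have "even (\<Sum>k\<in>{1..b}. ((2::nat) ^ L choose k) * (x choose (b - k)))"
    using assms by (intro dvd_sum) (auto intro: dvd_mult2 even_pow2_choose)
  ultimately show ?thesis by simp
qed

lemma odd_mult_pow2_add_choose:
  assumes "b < 2 ^ L"
  shows "odd ((a * 2 ^ L + b) choose b)"
proof (induction a)
  case (Suc a)
  then show ?case using even_pow2_add_choose_iff[OF assms, of "a * 2 ^ L + b"]
    by (simp add: add.assoc)
qed simp

lemma odd_choose_div_mult_pow2: "odd (n choose (n div 2 ^ \<alpha> * 2 ^ \<alpha>))"
proof -
  have "odd ((n div 2 ^ \<alpha> * 2 ^ \<alpha> + n mod 2 ^ \<alpha>) choose (n mod 2 ^ \<alpha>))"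
    by (intro odd_mult_pow2_add_choose) simp
  then show ?thesis
    by (simp only: div_mult_mod_eq)
      (simp add: binomial_symmetric[of "n div 2 ^ \<alpha> * 2 ^ \<alpha>" n] minus_div_mult_eq_mod)
qed

lemma even_Stirling_iff:
  "even (Stirling (Suc m + d) (Suc m)) \<longleftrightarrow> even ((d + m div 2) choose (m div 2))"
proof (induction m arbitrary: d)
  case 0
  show ?case using Stirling_1[of d] by simp
next
  case (Suc m)
  note IH = Suc.IH
  show ?case
  proof (induction d)
    case (Suc d)
    have rec: "Stirling (Suc (Suc m) + Suc d) (Suc (Suc m))
        = Suc (Suc m) * Stirling (Suc (Suc m) + d) (Suc (Suc m)) + Stirling (Suc m + Suc d) (Suc m)"
      by simp
    \<comment> \<open>The factor \<open>Suc (Suc m)\<close> is odd exactly when \<open>m\<close> is; then Pascal's rule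
      combines the two induction hypotheses.\<close>
    show ?case
    proof (cases "even m")
      case True
      then show ?thesis using rec IH[of "Suc d"] by (simp del: Stirling.simps)
    next
      case False
      then obtain c where c: "m = Suc (2 * c)" by (metis oddE Suc_eq_plus1)
      show ?thesis using rec IH[of "Suc d"] Suc.IH c by (simp del: Stirling.simps) blast
    qed
  qed simp
qed

lemma odd_Stirling:
  assumes "0 < m" "m \<le> l" "m < 2 ^ Suc L" "2 ^ L dvd l - m"
  shows "odd (Stirling l m)"
proof -
  obtain c where c: "l - m = c * 2 ^ L"
    using assms(4) by (metis dvd_def mult.commute)
  obtain m' where m': "m = Suc m'"
    using assms(1) gr0_implies_Suc by blast
  have "m' div 2 < 2 ^ L"
    using assms(3) m' by simp
  then have "odd ((c * 2 ^ L + m' div 2) choose (m' div 2))"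
    by (rule odd_mult_pow2_add_choose)
  moreover have "Suc m' + c * 2 ^ L = l"
    using assms(2) c m' by simp
  ultimately show ?thesis
    using even_Stirling_iff[of m' "c * 2 ^ L"] m' by simp
qed

lemma less_pow2_Suc_floor_log:
  fixes x :: real
  assumes "1 \<le> x"
  shows "x < 2 ^ Suc (nat \<lfloor>log 2 x\<rfloor>)"
proof -
  have exponent: "real_of_int (\<lfloor>log 2 x\<rfloor> + 1) = real (Suc (nat \<lfloor>log 2 x\<rfloor>))"
    using assms by simp
  have "x < 2 powr (\<lfloor>log 2 x\<rfloor> + 1)"
    using floor_log_eq_powr_iff[of x 2 "\<lfloor>log 2 x\<rfloor>"] assms by simp
  also have "\<dots> = 2 ^ Suc (nat \<lfloor>log 2 x\<rfloor>)"
    unfolding exponent by (rule powr_realpow) simp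
  finally show ?thesis .
qed

lemma odd_Stirling_div_pow2:
  assumes "1 \<le> n div 2 ^ \<alpha>" and "int (n div 2 ^ \<alpha>) \<le> l"
    and "[l = int (n div 2 ^ \<alpha>)] (mod 2 ^ nat \<lfloor>log 2 (real n / 2 ^ \<alpha>)\<rfloor>)"
  shows "odd (Stirling (nat l) (n div 2 ^ \<alpha>))"
proof -
  define m L where "m = n div 2 ^ \<alpha>" and "L = nat \<lfloor>log 2 (real n / 2 ^ \<alpha>)\<rfloor>"
  have "m \<le> nat l" using assms(2) unfolding m_def by linarith
  have "real m \<le> real n / 2 ^ \<alpha>"
    using of_nat_div_le_of_nat[of n "2 ^ \<alpha>"] unfolding m_def by simp
  moreover have "1 \<le> real m"
    using assms(1) unfolding m_def by simp
  ultimately have "real m < 2 ^ Suc L"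
    using less_pow2_Suc_floor_log[of "real n / 2 ^ \<alpha>"] unfolding L_def by linarith
  then have "m < 2 ^ Suc L"
    by (metis of_nat_less_iff of_nat_numeral of_nat_power)
  moreover have "(2::int) ^ L dvd int (nat l - m)"
    using assms(2,3) \<open>m \<le> nat l\<close> unfolding m_def L_def by (simp add: cong_iff_dvd_diff)
  then have "2 ^ L dvd nat l - m"
    by (metis of_nat_dvd_iff of_nat_numeral of_nat_power)
  ultimately show ?thesis
    using assms(1) \<open>m \<le> nat l\<close> unfolding m_def by (intro odd_Stirling) auto
qed

section \<open>Falling factorials and sieved alternating sums\<close>

definition falling_poly :: "nat \<Rightarrow> 'a::comm_ring_1 poly" where
  "falling_poly i = (\<Prod>s<i. [:- of_nat s, 1:])"

lemma poly_falling_poly: "poly (falling_poly i) x = (\<Prod>s<i. x - of_nat s)"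
  by (simp add: falling_poly_def poly_prod)

lemma poly_falling_poly_Suc:
  "poly (falling_poly (Suc i)) x = poly (falling_poly i) x * (x - of_nat i)"
  by (simp add: poly_falling_poly)

lemma degree_falling_poly_le: "degree (falling_poly i :: 'a::comm_ring_1 poly) \<le> i"
  using degree_prod_sum_le[of "{..<i}" "\<lambda>s. [:- of_nat s :: 'a, 1:]"]
  by (simp add: falling_poly_def o_def)

lemma poly_falling_poly_of_nat_less:
  "j < i \<Longrightarrow> poly (falling_poly i) (of_nat j :: 'a::comm_ring_1) = 0"
  unfolding poly_falling_poly by (intro prod_zero bexI[of _ j]) auto

lemma poly_falling_poly_of_nat_self:
  "poly (falling_poly m) (of_nat m :: 'a::comm_ring_1) = of_nat (fact m)"
proof -
  have "(\<Prod>s<m. of_nat m - of_nat s :: 'a) = (\<Prod>s<m. of_nat (m - s))"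
    by (intro prod.cong) auto
  then show ?thesis
    by (simp add: poly_falling_poly fact_prod_rev[where 'a = nat] atLeast0LessThan)
qed

lemma power_eq_sum_Stirling_falling:
  fixes x :: "'a::comm_ring_1"
  shows "x ^ l = (\<Sum>i\<le>l. of_nat (Stirling l i) * poly (falling_poly i) x)"
proof (induction l)
  case 0
  then show ?case by (simp add: falling_poly_def)
next
  case (Suc l)
  let ?S = "\<lambda>i. of_nat (Stirling l i) :: 'a" and ?f = "\<lambda>i. poly (falling_poly i) x"
  have "(\<Sum>i\<le>Suc l. of_nat (Stirling (Suc l) i) * ?f i)
      = (\<Sum>i\<le>l. of_nat (Suc i) * ?S (Suc i) * ?f (Suc i)) + (\<Sum>i\<le>l. ?S i * ?f (Suc i))"
    by (simp add: sum.atMost_Suc_shift sum.distrib algebra_simps del: sum.atMost_Suc)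
  also have "(\<Sum>i\<le>l. of_nat (Suc i) * ?S (Suc i) * ?f (Suc i)) = (\<Sum>i\<le>Suc l. of_nat i * ?S i * ?f i)"
    by (subst sum.atMost_Suc_shift) simp
  also have "\<dots> = (\<Sum>i\<le>l. of_nat i * ?S i * ?f i)"
    by simp
  also have "\<dots> + (\<Sum>i\<le>l. ?S i * ?f (Suc i)) = (\<Sum>i\<le>l. ?S i * ?f i) * x"
    by (simp add: sum_distrib_left sum_distrib_right sum.distrib[symmetric] poly_falling_poly_Suc
        algebra_simps)
  finally show ?case
    using Suc by (simp only: power_Suc2)
qed

definition sieved_alt_sum :: "nat \<Rightarrow> nat \<Rightarrow> (nat \<Rightarrow> int) \<Rightarrow> int" where
  "sieved_alt_sum n N f = (\<Sum>k\<in>{k. k \<le> n \<and> N dvd k}. int (n choose k) * (-1) ^ k * f (k div N))"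

lemma sieved_alt_sum_sum:
  "sieved_alt_sum n N (\<lambda>j. \<Sum>i\<in>I. g i j) = (\<Sum>i\<in>I. sieved_alt_sum n N (g i))"
  unfolding sieved_alt_sum_def by (subst sum.swap) (simp add: sum_distrib_left)

lemma sieved_alt_sum_cmult: "sieved_alt_sum n N (\<lambda>j. c * f j) = c * sieved_alt_sum n N f"
  unfolding sieved_alt_sum_def by (simp add: sum_distrib_left algebra_simps)

lemma sieved_alt_sum_poly_dvd:
  assumes "degree p < m" and "\<And>t. t < m \<Longrightarrow> d dvd sieved_alt_sum n N (\<lambda>j. int j ^ t)"
  shows "d dvd sieved_alt_sum n N (\<lambda>j. poly p (int j))"
proof -
  have "sieved_alt_sum n N (\<lambda>j. poly p (int j))
      = (\<Sum>i\<le>degree p. coeff p i * sieved_alt_sum n N (\<lambda>j. int j ^ i))"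
    by (simp add: poly_altdef sieved_alt_sum_sum sieved_alt_sum_cmult)
  also have "d dvd \<dots>"
    using assms by (intro dvd_sum dvd_mult) auto
  finally show ?thesis .
qed

lemma sieved_alt_sum_falling_poly_gt:
  assumes "n div N < i"
  shows "sieved_alt_sum n N (\<lambda>j. poly (falling_poly i) (int j)) = 0"
  unfolding sieved_alt_sum_def
proof (intro sum.neutral ballI)
  fix k assume "k \<in> {k. k \<le> n \<and> N dvd k}"
  then have "k div N < i" using assms div_le_mono[of k n N] by simp
  then show "int (n choose k) * (-1) ^ k * poly (falling_poly i) (int (k div N)) = 0"
    by (simp add: poly_falling_poly_of_nat_less)
qed

lemma sieved_alt_sum_falling_poly_self:
  assumes "0 < N" and m: "m = n div N"
  shows "sieved_alt_sum n N (\<lambda>j. poly (falling_poly m) (int j))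
    = int (n choose (m * N)) * (-1) ^ (m * N) * fact m"
proof -
  let ?A = "{k. k \<le> n \<and> N dvd k}"
    and ?g = "\<lambda>k. int (n choose k) * (-1) ^ k * poly (falling_poly m) (int (k div N))"
  have mem: "m * N \<in> ?A" using m by simp
  have "(\<Sum>k\<in>?A - {m * N}. ?g k) = 0"
  proof (intro sum.neutral ballI)
    fix k assume k: "k \<in> ?A - {m * N}"
    then have "k div N \<noteq> m" by (auto simp: dvd_def)
    then have "k div N < m" using k m div_le_mono[of k n N] by simp
    then show "?g k = 0" by (simp add: poly_falling_poly_of_nat_less)
  qed
  then show ?thesis
    unfolding sieved_alt_sum_def using assms
    by (simp add: sum.remove[OF _ mem] poly_falling_poly_of_nat_self)
qed

lemma sieved_alt_sum_power_dvd_diff: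
  assumes "0 < N" and m: "m = n div N" and "m \<le> l"
    and moments: "\<And>t. t < m \<Longrightarrow> d dvd sieved_alt_sum n N (\<lambda>j. int j ^ t)"
  shows "d dvd sieved_alt_sum n N (\<lambda>j. int j ^ l)
    - int (Stirling l m) * int (n choose (m * N)) * (-1) ^ (m * N) * fact m"
proof -
  let ?F = "\<lambda>i. int (Stirling l i) * sieved_alt_sum n N (\<lambda>j. poly (falling_poly i) (int j))"
  have "sieved_alt_sum n N (\<lambda>j. int j ^ l) = (\<Sum>i\<le>l. ?F i)"
    by (simp add: power_eq_sum_Stirling_falling[where x = "int _"] sieved_alt_sum_sum
        sieved_alt_sum_cmult)
  also have "\<dots> = ?F m + (\<Sum>i\<in>{..l} - {m}. ?F i)"
    using \<open>m \<le> l\<close> by (subst sum.remove[of _ m]) auto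
  finally have split: "sieved_alt_sum n N (\<lambda>j. int j ^ l) = ?F m + (\<Sum>i\<in>{..l} - {m}. ?F i)" .
  have "d dvd ?F i" if "i \<noteq> m" for i
  proof (cases "i < m")
    case True
    then show ?thesis
      using degree_falling_poly_le[of i, where 'a = int] moments
      by (intro dvd_mult sieved_alt_sum_poly_dvd[of _ m]) auto
  next
    case False
    then show ?thesis using that m by (simp add: sieved_alt_sum_falling_poly_gt)
  qed
  then have "d dvd (\<Sum>i\<in>{..l} - {m}. ?F i)" by (intro dvd_sum) auto
  then show ?thesis
    using assms by (simp add: split sieved_alt_sum_falling_poly_self)
qed

section \<open>Moments of binomial coefficients of fixed parity\<close>

definition parity_moment :: "nat \<Rightarrow> bool \<Rightarrow> nat \<Rightarrow> int" where
  "parity_moment b q t = (\<Sum>s\<le>b. if even s = q then int (b choose s) * int s ^ t else 0)"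

lemma parity_moment_Suc_0: "parity_moment (Suc b) q 0 = 2 ^ b"
proof -
  have "2 * parity_moment (Suc b) q 0 = 2 ^ Suc b"
    unfolding parity_moment_def power_0 mult_1_right
    using choose_even_sum[of "Suc b", where 'a = int] choose_odd_sum[of "Suc b", where 'a = int]
    by (cases q) (simp_all del: sum.atMost_Suc)
  then show ?thesis by simp
qed

lemma parity_moment_Suc_Suc:
  "parity_moment (Suc b) q (Suc t)
    = int (Suc b) * (\<Sum>w\<le>t. int (t choose w) * parity_moment b (\<not> q) w)"
proof -
  have summand: "int (Suc b choose Suc s) * int (Suc s) ^ Suc t
      = int (Suc b) * (\<Sum>w\<le>t. int (t choose w) * (int (b choose s) * int s ^ w))" for s
  proof -
    have binom: "int (Suc b choose Suc s) * int (Suc s) = int (Suc b) * int (b choose s)"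
      by (metis Suc_times_binomial_eq of_nat_mult)
    have power: "int (Suc s) ^ t = (\<Sum>w\<le>t. of_nat (t choose w) * int s ^ w * 1 ^ (t - w))"
      by (subst binomial_ring[symmetric]) (simp add: add.commute)
    have "int (Suc b choose Suc s) * int (Suc s) ^ Suc t
        = (int (Suc b choose Suc s) * int (Suc s)) * int (Suc s) ^ t"
      by (simp only: power_Suc mult_ac)
    also have "\<dots> = int (Suc b) * (\<Sum>w\<le>t. int (t choose w) * (int (b choose s) * int s ^ w))"
      unfolding binom power by (simp add: sum_distrib_left mult_ac)
    finally show ?thesis .
  qed
  have "parity_moment (Suc b) q (Suc t)
      = (\<Sum>s\<le>b. if even s = (\<not> q) then int (Suc b choose Suc s) * int (Suc s) ^ Suc t else 0)"
    by (simp add: parity_moment_def sum.atMost_Suc_shift del: sum.atMost_Suc)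
  also have "\<dots> = int (Suc b) * (\<Sum>w\<le>t. int (t choose w) * parity_moment b (\<not> q) w)"
    unfolding summand parity_moment_def sum_distrib_left
    by (subst sum.swap) (intro sum.cong; simp)
  finally show ?thesis .
qed

lemma parity_moment_True_eq_False: "t < b \<Longrightarrow> parity_moment b True t = parity_moment b False t"
proof (induction b arbitrary: t)
  case (Suc b)
  show ?case
  proof (cases t)
    case (Suc t')
    then have "parity_moment b True w = parity_moment b False w" if "w \<le> t'" for w
      using Suc.IH Suc.prems that by simp
    then show ?thesis
      using Suc by (simp add: parity_moment_Suc_Suc del: of_nat_Suc)
  qed (simp add: parity_moment_Suc_0)
qed simp

lemma alternating_moment_eq_0: "t < n \<Longrightarrow> (\<Sum>k\<le>n. int (n choose k) * (-1) ^ k * int k ^ t) = 0"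
proof -
  assume "t < n"
  have "(\<Sum>k\<le>n. int (n choose k) * (-1) ^ k * int k ^ t)
      = parity_moment n True t - parity_moment n False t"
    unfolding parity_moment_def sum_subtractf[symmetric] by (intro sum.cong) auto
  then show ?thesis using parity_moment_True_eq_False[OF \<open>t < n\<close>] by simp
qed

lemma pow2_v2_fact_dvd_parity_moment: "(2::int) ^ v2 (fact b) dvd parity_moment b q t"
proof (induction b arbitrary: q t)
  case (Suc b)
  show ?case
  proof (cases t)
    case 0
    have "v2 (fact (Suc b)) \<le> b" using v2_fact_less[of "Suc b"] by simp
    then show ?thesis using 0 by (simp add: parity_moment_Suc_0 le_imp_power_dvd)
  next
    case (Suc t')
    have "(2::int) ^ v2 (fact b) dvd (\<Sum>w\<le>t'. int (t' choose w) * parity_moment b (\<not> q) w)"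
      using Suc.IH by (intro dvd_sum dvd_mult)
    then have "int (Suc b) * 2 ^ v2 (fact b) dvd parity_moment (Suc b) q t"
      unfolding Suc parity_moment_Suc_Suc by (rule mult_dvd_mono[OF dvd_refl])
    then show ?thesis using v2_fact_Suc_dvd[of b] by (rule dvd_trans[rotated])
  qed
qed simp

section \<open>Moments of polynomial coefficients along residue classes\<close>

(* The factor 2 lets the class of odd exponents of (1 + X^K)^b modulo 2 K be expressed through
   ordinary moments, since 2 (s div 2) = s - 1 for odd s. *)
definition residue_moment :: "nat \<Rightarrow> int poly \<Rightarrow> nat \<Rightarrow> nat \<Rightarrow> int" where
  "residue_moment N f r t =
    (\<Sum>k\<le>degree f. if k mod N = r then coeff f k * (2 * int (k div N)) ^ t else 0)"

lemma residue_moment_eq_sum_atMost: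
  assumes "degree f \<le> D"
  shows "residue_moment N f r t =
    (\<Sum>k\<le>D. if k mod N = r then coeff f k * (2 * int (k div N)) ^ t else 0)"
  unfolding residue_moment_def
  by (rule sum.mono_neutral_left) (use assms in \<open>auto simp: coeff_eq_0\<close>)

lemma residue_moment_add:
  "residue_moment N (f + g) r t = residue_moment N f r t + residue_moment N g r t"
proof -
  let ?D = "max (degree f) (degree g)"
  have "degree (f + g) \<le> ?D" by (rule degree_add_le) auto
  then show ?thesis
    by (simp add: residue_moment_eq_sum_atMost[of _ ?D] sum.distrib[symmetric]
        residue_moment_eq_sum_atMost[of f ?D, OF max.cobounded1]
        residue_moment_eq_sum_atMost[of g ?D, OF max.cobounded2];
        intro sum.cong; simp add: algebra_simps)
qed

lemma residue_moment_smult: "residue_moment N (smult c f) r t = c * residue_moment N f r t"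
proof -
  have "residue_moment N (smult c f) r t =
      (\<Sum>k\<le>degree f. if k mod N = r then coeff (smult c f) k * (2 * int (k div N)) ^ t else 0)"
    by (rule residue_moment_eq_sum_atMost) (rule degree_smult_le)
  also have "\<dots> = c * residue_moment N f r t"
    unfolding residue_moment_def sum_distrib_left by (intro sum.cong) auto
  finally show ?thesis .
qed

lemma residue_moment_0 [simp]: "residue_moment N 0 r t = 0"
  unfolding residue_moment_def by (intro sum.neutral) simp

lemma residue_moment_sum: "residue_moment N (\<Sum>i\<in>A. f i) r t = (\<Sum>i\<in>A. residue_moment N (f i) r t)"
  by (induction A rule: infinite_finite_induct) (auto simp: residue_moment_add)

lemma residue_moment_monom:
  "residue_moment N (monom c k) r t = (if k mod N = r then c * (2 * int (k div N)) ^ t else 0)"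
proof -
  have "residue_moment N (monom c k) r t =
      (\<Sum>i\<le>k. if i = k then (if k mod N = r then c * (2 * int (k div N)) ^ t else 0) else 0)"
    unfolding residue_moment_eq_sum_atMost[OF degree_monom_le] by (intro sum.cong) auto
  then show ?thesis by simp
qed

lemma residue_moment_pCons_0:
  assumes "0 < r" "r < N"
  shows "residue_moment N (pCons 0 f) r t = residue_moment N f (r - 1) t"
proof -
  let ?g = "\<lambda>f r k. if k mod N = r then coeff f k * (2 * int (k div N)) ^ t else 0"
  have "residue_moment N (pCons 0 f) r t
      = ?g (pCons 0 f) r 0 + (\<Sum>k\<le>degree f. ?g (pCons 0 f) r (Suc k))"
    by (simp add: residue_moment_eq_sum_atMost[OF degree_pCons_le] sum.atMost_Suc_shift
        del: sum.atMost_Suc)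
  also have "\<dots> = (\<Sum>k\<le>degree f. ?g f (r - 1) k)"
  proof -
    have "?g (pCons 0 f) r (Suc k) = ?g f (r - 1) k" for k
      using assms by (auto simp: mod_Suc div_Suc)
    then show ?thesis by simp
  qed
  finally show ?thesis by (simp add: residue_moment_def)
qed

lemma residue_moment_pCons_0_zero:
  assumes "0 < N"
  shows "residue_moment N (pCons 0 f) 0 t =
    (\<Sum>s\<le>t. of_nat (t choose s) * 2 ^ (t - s) * residue_moment N f (N - 1) s)"
proof -
  let ?g = "\<lambda>f r t k. if k mod N = r then coeff f k * (2 * int (k div N)) ^ t else 0"
  have shift: "?g (pCons 0 f) 0 t (Suc k)
      = (\<Sum>s\<le>t. of_nat (t choose s) * 2 ^ (t - s) * ?g f (N - 1) s k)" for k
  proof (cases "Suc k mod N = 0")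
    case True
    then have "k mod N = N - 1" "Suc k div N = Suc (k div N)"
      using assms by (auto simp: mod_Suc div_Suc split: if_splits)
    moreover have "(2 * int (Suc (k div N))) ^ t = (2 * int (k div N) + 2) ^ t"
      by (simp add: algebra_simps)
    moreover have "\<dots> = (\<Sum>s\<le>t. of_nat (t choose s) * (2 * int (k div N)) ^ s * 2 ^ (t - s))"
      by (rule binomial_ring)
    ultimately show ?thesis
      using True by (simp add: sum_distrib_left algebra_simps)
  next
    case False
    then have "k mod N \<noteq> N - 1" using assms by (auto simp: mod_Suc split: if_splits)
    then show ?thesis using False by simp
  qed
  have "residue_moment N (pCons 0 f) 0 t
      = ?g (pCons 0 f) 0 t 0 + (\<Sum>k\<le>degree f. ?g (pCons 0 f) 0 t (Suc k))"
    by (simp add: residue_moment_eq_sum_atMost[OF degree_pCons_le] sum.atMost_Suc_shift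
        del: sum.atMost_Suc)
  also have "\<dots> = (\<Sum>k\<le>degree f. \<Sum>s\<le>t. of_nat (t choose s) * 2 ^ (t - s) * ?g f (N - 1) s k)"
    by (simp add: shift)
  also have "\<dots> = (\<Sum>s\<le>t. of_nat (t choose s) * 2 ^ (t - s) * residue_moment N f (N - 1) s)"
    by (subst sum.swap) (simp add: residue_moment_def sum_distrib_left)
  finally show ?thesis .
qed

definition residue_moments_dvd :: "nat \<Rightarrow> nat \<Rightarrow> int poly \<Rightarrow> bool" where
  "residue_moments_dvd N e f \<longleftrightarrow> (\<forall>r<N. \<forall>t. (2::int) ^ e dvd residue_moment N f r t)"

lemma residue_moments_dvd_add:
  "residue_moments_dvd N e f \<Longrightarrow> residue_moments_dvd N e g \<Longrightarrow> residue_moments_dvd N e (f + g)"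
  by (simp add: residue_moments_dvd_def residue_moment_add)

lemma residue_moments_dvd_smult:
  "residue_moments_dvd N e f \<Longrightarrow> (2::int) ^ j dvd c \<Longrightarrow> residue_moments_dvd N (e + j) (smult c f)"
  by (auto simp: residue_moments_dvd_def residue_moment_smult power_add mult.commute
      intro: mult_dvd_mono)

lemma residue_moments_dvd_mono:
  "residue_moments_dvd N e f \<Longrightarrow> e' \<le> e \<Longrightarrow> residue_moments_dvd N e' f"
  unfolding residue_moments_dvd_def by (meson dvd_trans le_imp_power_dvd)

lemma residue_moments_dvd_0 [simp]: "residue_moments_dvd N e 0"
  by (simp add: residue_moments_dvd_def)

lemma residue_moments_dvd_sum:
  "(\<And>i. i \<in> A \<Longrightarrow> residue_moments_dvd N e (f i)) \<Longrightarrow> residue_moments_dvd N e (\<Sum>i\<in>A. f i)"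
  by (induction A rule: infinite_finite_induct) (auto intro: residue_moments_dvd_add)

lemma residue_moments_dvd_pCons_0:
  assumes "0 < N" "residue_moments_dvd N e f"
  shows "residue_moments_dvd N e (pCons 0 f)"
  unfolding residue_moments_dvd_def
proof (intro allI impI)
  fix r t assume r: "r < N"
  show "(2::int) ^ e dvd residue_moment N (pCons 0 f) r t"
  proof (cases "r = 0")
    case True
    have "N - 1 < N" using assms by simp
    then show ?thesis using True assms(2) unfolding residue_moments_dvd_def
      by (simp add: residue_moment_pCons_0_zero[OF assms(1)] dvd_sum)
  next
    case False
    then show ?thesis
      using r assms(2) unfolding residue_moments_dvd_def by (simp add: residue_moment_pCons_0)
  qed
qed

lemma residue_moments_dvd_mult:
  assumes "0 < N" "residue_moments_dvd N e f"
  shows "residue_moments_dvd N e (g * f)"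
proof (induction g)
  case 0 then show ?case by simp
next
  case (pCons a g)
  have "residue_moments_dvd N (e + 0) (smult a f)"
    using assms(2) by (intro residue_moments_dvd_smult) auto
  then show ?case
    using pCons assms by (auto intro: residue_moments_dvd_add residue_moments_dvd_pCons_0)
qed

section \<open>Moments of the coefficients of (1 + X)^n\<close>

lemma one_plus_monom_power:
  "(1 + monom (1::int) K) ^ b = (\<Sum>s\<le>b. monom (of_nat (b choose s)) (K * s))"
proof -
  have "(monom (1::int) K + 1) ^ b = (\<Sum>s\<le>b. of_nat (b choose s) * monom 1 K ^ s * 1 ^ (b - s))"
    by (rule binomial_ring)
  also have "\<dots> = (\<Sum>s\<le>b. monom (of_nat (b choose s)) (K * s))"
    by (intro sum.cong) (auto simp: monom_power of_nat_mult_conv_smult smult_monom mult.commute)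
  finally show ?thesis by (simp add: add.commute)
qed

lemma residue_moment_one_plus_monom_power:
  "residue_moment N ((1 + monom 1 K) ^ b) r t =
     (\<Sum>s\<le>b. if (K * s) mod N = r then int (b choose s) * (2 * int ((K * s) div N)) ^ t else 0)"
  by (simp add: one_plus_monom_power residue_moment_sum residue_moment_monom)

lemma residue_moment_one_plus_monom_power_double:
  assumes "0 < K"
  shows "residue_moment (2 * K) ((1 + monom 1 K) ^ b) r t =
    (\<Sum>s\<le>b. if K * (s mod 2) = r then int (b choose s) * (2 * int (s div 2)) ^ t else 0)"
proof -
  have "(K * s) mod (2 * K) = K * (s mod 2)" "(K * s) div (2 * K) = s div 2" for s
    using assms by (simp_all add: mult.commute[of 2 K] mod_mult_mult1)
  then show ?thesis by (simp only: residue_moment_one_plus_monom_power)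
qed

lemma residue_moment_one_plus_monom_power_even_class:
  assumes "0 < K"
  shows "residue_moment (2 * K) ((1 + monom 1 K) ^ b) 0 t = parity_moment b True t"
  unfolding residue_moment_one_plus_monom_power_double[OF assms] parity_moment_def
  using assms by (intro sum.cong refl) (auto elim!: evenE)

lemma residue_moment_one_plus_monom_power_odd_class:
  assumes "0 < K"
  shows "residue_moment (2 * K) ((1 + monom 1 K) ^ b) K t =
    (\<Sum>w\<le>t. int (t choose w) * (-1) ^ (t - w) * parity_moment b False w)"
proof -
  have summand: "(if K * (s mod 2) = K then int (b choose s) * (2 * int (s div 2)) ^ t else 0)
      = (\<Sum>w\<le>t. int (t choose w) * (-1) ^ (t - w) *
          (if even s = False then int (b choose s) * int s ^ w else 0))"
    for s
  proof (cases "even s")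
    case False
    then have "2 * int (s div 2) = int s + (-1)" by (auto elim!: oddE)
    then have "(2 * int (s div 2)) ^ t = (\<Sum>w\<le>t. of_nat (t choose w) * int s ^ w * (-1) ^ (t - w))"
      by (simp only: binomial_ring)
    then show ?thesis using False assms by (simp add: sum_distrib_left algebra_simps mod2_eq_if)
  qed (use assms in simp)
  then show ?thesis
    unfolding residue_moment_one_plus_monom_power_double[OF assms] parity_moment_def summand
    by (subst sum.swap) (simp add: sum_distrib_left)
qed

lemma residue_moments_dvd_one_plus_monom_power:
  assumes "0 < K"
  shows "residue_moments_dvd (2 * K) (v2 (fact b)) ((1 + monom 1 K) ^ b)"
  unfolding residue_moments_dvd_def
proof (intro allI impI)
  fix r t assume "r < 2 * K"
  consider "r = 0" | "r = K" | "r \<noteq> 0" "r \<noteq> K" by blast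
  then show "(2::int) ^ v2 (fact b) dvd residue_moment (2 * K) ((1 + monom 1 K) ^ b) r t"
  proof cases
    case 1
    then show ?thesis
      using assms
      by (simp add: residue_moment_one_plus_monom_power_even_class pow2_v2_fact_dvd_parity_moment)
  next
    case 2
    then show ?thesis
      using assms by (simp add: residue_moment_one_plus_monom_power_odd_class dvd_sum
          pow2_v2_fact_dvd_parity_moment)
  next
    case 3
    then have "residue_moment (2 * K) ((1 + monom 1 K) ^ b) r t = 0"
      using assms unfolding residue_moment_one_plus_monom_power_double[OF assms]
      by (intro sum.neutral) (auto simp: mod2_eq_if)
    then show ?thesis by simp
  qed
qed

lemma one_plus_X_power_pow2_split:
  "\<exists>\<rho>. (1 + monom (1::int) 1) ^ 2 ^ \<beta> = 1 + monom 1 (2 ^ \<beta>) + 2 * \<rho>"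
proof (induction \<beta>)
  case 0
  then show ?case by (intro exI[of _ 0]) simp
next
  case (Suc \<beta>)
  then obtain \<rho> where \<rho>: "(1 + monom (1::int) 1) ^ 2 ^ \<beta> = 1 + monom 1 (2 ^ \<beta>) + 2 * \<rho>"
    by blast
  let ?Y = "monom (1::int) (2 ^ \<beta>)"
  have "(1 + monom (1::int) 1) ^ 2 ^ Suc \<beta> = ((1 + monom (1::int) 1) ^ 2 ^ \<beta>) ^ 2"
    by (simp add: power_mult[symmetric] mult.commute)
  also have "\<dots> = 1 + ?Y * ?Y + 2 * (?Y + 2 * \<rho> + 2 * \<rho> * ?Y + 2 * \<rho> * \<rho>)"
    unfolding \<rho> by (simp add: power2_eq_square algebra_simps)
  also have "?Y * ?Y = monom 1 (2 ^ Suc \<beta>)"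
    by (simp add: mult_monom mult_2)
  finally show ?case by blast
qed

lemma residue_moments_dvd_one_plus_X_power_mult:
  "residue_moments_dvd (2 * 2 ^ \<beta>) (v2 (fact q)) ((1 + monom 1 1) ^ (2 ^ \<beta> * q))"
proof -
  define K :: nat where "K = 2 ^ \<beta>"
  obtain \<rho> where \<rho>: "(1 + monom (1::int) 1) ^ K = 1 + monom 1 K + 2 * \<rho>"
    using one_plus_X_power_pow2_split unfolding K_def by blast
  let ?h = "1 + monom (1::int) K"
  have summand: "of_nat (q choose a) * (2 * \<rho>) ^ a * ?h ^ (q - a)
      = smult (int (q choose a) * 2 ^ a) (\<rho> ^ a * ?h ^ (q - a))" for a
  proof -
    have "(2 * \<rho>) ^ a = smult (2 ^ a) (\<rho> ^ a)"
      by (simp only: numeral_mult_conv_smult smult_power)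
    then show ?thesis by (simp only: of_nat_mult_conv_smult smult_smult mult_smult_left)
  qed
  have "(1 + monom (1::int) 1) ^ (K * q) = (2 * \<rho> + ?h) ^ q"
    by (simp only: power_mult \<rho>) (simp add: ac_simps)
  also have "\<dots> = (\<Sum>a\<le>q. smult (int (q choose a) * 2 ^ a) (\<rho> ^ a * ?h ^ (q - a)))"
    by (subst binomial_ring) (simp only: summand)
  finally have expand: "(1 + monom (1::int) 1) ^ (K * q) = \<dots>" .
  have "residue_moments_dvd (2 * K) (v2 (fact q))
      (smult (int (q choose a) * 2 ^ a) (\<rho> ^ a * ?h ^ (q - a)))" if "a \<le> q" for a
  proof -
    have "residue_moments_dvd (2 * K) (v2 (fact (q - a))) (\<rho> ^ a * ?h ^ (q - a))"
      by (intro residue_moments_dvd_mult residue_moments_dvd_one_plus_monom_power)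
        (simp_all add: K_def)
    moreover have "(2::int) ^ (v2 (int (q choose a)) + a) dvd int (q choose a) * 2 ^ a"
      by (simp add: power_add mult_dvd_mono multiplicity_dvd)
    ultimately have "residue_moments_dvd (2 * K) (v2 (fact (q - a)) + (v2 (int (q choose a)) + a))
        (smult (int (q choose a) * 2 ^ a) (\<rho> ^ a * ?h ^ (q - a)))"
      by (rule residue_moments_dvd_smult)
    moreover have "v2 (fact q) \<le> v2 (fact (q - a)) + (v2 (int (q choose a)) + a)"
      using v2_fact_le_binomial[OF that] by simp
    ultimately show ?thesis by (rule residue_moments_dvd_mono)
  qed
  then show ?thesis
    unfolding K_def[symmetric] expand by (intro residue_moments_dvd_sum) simp
qed

lemma residue_moments_dvd_one_plus_X_power:
  "residue_moments_dvd (2 * 2 ^ \<beta>) (v2 (fact (n div 2 ^ \<beta>))) ((1 + monom 1 1) ^ n)"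
proof -
  have "(1 + monom (1::int) 1) ^ n
      = (1 + monom 1 1) ^ (n mod 2 ^ \<beta>) * (1 + monom 1 1) ^ (2 ^ \<beta> * (n div 2 ^ \<beta>))"
    by (simp flip: power_add)
  then show ?thesis
    using residue_moments_dvd_one_plus_X_power_mult by (simp add: residue_moments_dvd_mult)
qed

lemma residue_moment_one_plus_X_power_zero_class:
  assumes "even N"
  shows "residue_moment N ((1 + monom 1 1) ^ n) 0 t = 2 ^ t * sieved_alt_sum n N (\<lambda>j. int j ^ t)"
proof -
  have "residue_moment N ((1 + monom 1 1) ^ n) 0 t
      = (\<Sum>s\<le>n. if s mod N = 0 then int (n choose s) * (2 * int (s div N)) ^ t else 0)"
    unfolding residue_moment_one_plus_monom_power by (intro sum.cong) auto
  also have "\<dots> = (\<Sum>s\<in>{s\<in>{..n}. s mod N = 0}. int (n choose s) * (2 * int (s div N)) ^ t)"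
    by (rule sum.inter_filter[symmetric]) simp
  also have "{s\<in>{..n}. s mod N = 0} = {k. k \<le> n \<and> N dvd k}"
    by auto
  also have "(\<Sum>s\<in>{k. k \<le> n \<and> N dvd k}. int (n choose s) * (2 * int (s div N)) ^ t)
      = 2 ^ t * sieved_alt_sum n N (\<lambda>j. int j ^ t)"
    unfolding sieved_alt_sum_def sum_distrib_left
  proof (intro sum.cong refl)
    fix s assume "s \<in> {k. k \<le> n \<and> N dvd k}"
    then have "even s" using assms by (auto intro: dvd_trans)
    then show "int (n choose s) * (2 * int (s div N)) ^ t
        = 2 ^ t * (int (n choose s) * (-1) ^ s * int (s div N) ^ t)"
      by (simp add: power_mult_distrib)
  qed
  finally show ?thesis .
qed

lemma sieved_alt_sum_moment_dvd:
  assumes "t < n div 2 ^ \<alpha>"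
  shows "(2::int) ^ (v2 (fact (n div 2 ^ \<alpha>)) + 1) dvd sieved_alt_sum n (2 ^ \<alpha>) (\<lambda>j. int j ^ t)"
proof (cases \<alpha>)
  case 0
  have "sieved_alt_sum n 1 (\<lambda>j. int j ^ t) = (\<Sum>k\<le>n. int (n choose k) * (-1) ^ k * int k ^ t)"
    unfolding sieved_alt_sum_def by (intro sum.cong) auto
  then show ?thesis using 0 assms by (simp add: alternating_moment_eq_0)
next
  case (Suc \<beta>)
  define m e where "m = n div 2 ^ \<alpha>" and "e = v2 (fact m)"
  have "m = n div 2 ^ \<beta> div 2"
    unfolding m_def Suc by (metis div_mult2_eq power_Suc2)
  then have "2 * m \<le> n div 2 ^ \<beta>"
    by simp
  then have "m + e \<le> v2 (fact (n div 2 ^ \<beta>))"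
    using v2_fact_mono v2_fact_double unfolding e_def by metis
  then have "(2::int) ^ (t + (e + 1)) dvd 2 ^ v2 (fact (n div 2 ^ \<beta>))"
    using assms unfolding m_def by (intro le_imp_power_dvd) simp
  also have "\<dots> dvd 2 ^ t * sieved_alt_sum n (2 ^ \<alpha>) (\<lambda>j. int j ^ t)"
    using residue_moments_dvd_one_plus_X_power[of \<beta> n]
    unfolding residue_moments_dvd_def Suc
    by (auto simp flip: residue_moment_one_plus_X_power_zero_class)
  finally show ?thesis
    unfolding e_def m_def power_add by simp
qed

theorem theorem1p8:
  fixes \<alpha> n :: nat and l :: int
  assumes "1 \<le> n div 2 ^ \<alpha>"
    and "int (n div 2 ^ \<alpha>) \<le> l"
    and "[l = int (n div 2 ^ \<alpha>)] (mod 2 ^ nat \<lfloor>log 2 (real n / 2 ^ \<alpha>)\<rfloor>)"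
  shows "(\<Sum>k\<in>{k. k \<le> n \<and> 2 ^ \<alpha> dvd k}. int (n choose k) * (-1) ^ k * int (k div 2 ^ \<alpha>) ^ nat l) \<noteq> 0
    \<and> multiplicity (2::int) (\<Sum>k\<in>{k. k \<le> n \<and> 2 ^ \<alpha> dvd k}. int (n choose k) * (-1) ^ k * int (k div 2 ^ \<alpha>) ^ nat l)
      = multiplicity (2::nat) (fact (n div 2 ^ \<alpha>))"
proof -
  define m where "m = n div 2 ^ \<alpha>"
  define A where "A = sieved_alt_sum n (2 ^ \<alpha>) (\<lambda>j. int j ^ nat l)"
  define lead where
    "lead = int (Stirling (nat l) m) * int (n choose (m * 2 ^ \<alpha>)) * (-1) ^ (m * 2 ^ \<alpha>) * fact m"
  have "odd (int (Stirling (nat l) m) * int (n choose (m * 2 ^ \<alpha>)) * (-1) ^ (m * 2 ^ \<alpha>))"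
    using odd_Stirling_div_pow2[OF assms] odd_choose_div_mult_pow2[of n \<alpha>] unfolding m_def by simp
  then obtain u where "odd u" and "lead = u * fact m"
    unfolding lead_def by blast
  then have "lead \<noteq> 0" and "v2 lead = v2 (fact m)"
    by (auto simp: v2_odd_mult)
  moreover have "(2::int) ^ Suc (v2 (fact m)) dvd A - lead"
    unfolding A_def lead_def m_def using assms(2) sieved_alt_sum_moment_dvd[of _ n \<alpha>]
    by (intro sieved_alt_sum_power_dvd_diff) auto
  ultimately have "A \<noteq> 0 \<and> v2 A = v2 (fact m)"
    using multiplicity_eq_if_dvd_diff[of 2 lead A] by simp
  then show ?thesis
    using multiplicity_of_nat[of 2 "fact m"] by (simp add: A_def sieved_alt_sum_def m_def)
qed

end
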